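(* Let $A=k_{p_{ij}}[x_1,\dots,x_n]$ and let $G$ be a finite subgroup of $\mathrm{Aut}(A)$ generated by quasi-reflections such that $[n]$ is a circle for $G$. Then after replacing each $x_i$ by a suitable nonzero scalar multiple $c_ix_i$ (which leaves the relations $x_jx_i=p_{ij}x_ix_j$ unchanged), one has $\tau_{i,j,1}\in G$ for all $i\ne j$ in $[n]$. Consequently $p_{ij}=-1$ for all $i<j$.
   Context: $k$ is algebraically closed of characteristic zero, $n\ge2$, $[n]=\{1,\dots,n\}$. $A=k_{p_{ij}}[x_1,\dots,x_n]$ is generated by $x_1,\dots,x_n$ with $x_jx_i=p_{ij}x_ix_j$ ($i<j$), nonzero $p_{ij}$, $\deg x_i=1$; $p_{ii}=1$, $p_{ij}=p_{ji}^{-1}$ for $i>j$. $\mathrm{Aut}(A)$: graded algebra automorphisms; $g$ is a quasi-reflection if $\sum_i\mathrm{tr}(g|_{A_i})t^i=\frac1{(1-t)^{n-1}(1-\lambda t)}$ with $\lambda\ne1$. For $s,t$ with $p_{st}=-1$ and $p_{sj}=p_{tj}$ ($j\ne s,t$) and $\lambda\in k^\times$, $\tau_{s,t,\lambda}$ is the automorphism with $x_s\mapsto\lambda x_t$, $x_t\mapsto-\lambda^{-1}x_s$, $x_i\mapsto x_i$ otherwise. $[n]$ is a circle for $G$ if for each pair of distinct $i,j\in[n]$ there are $\tau_{i_s,j_s,\lambda_s}\in G$, $s=0,\dots,t$, with $i_0=i$, $i_{s+1}=j_s$, $j_t=j$. *)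

theory Defs
  imports "HOL-Computational_Algebra.Polynomial" "HOL-Computational_Algebra.Formal_Power_Series"
begin

text \<open>The skew polynomial ring A = k_{p_ij}[x_1,...,x_n], variables indexed by {1..n}.
  A monomial x^a = x_1^{a_1} ... x_n^{a_n} (ordered product) is an exponent vector
  a :: nat => nat vanishing outside {1..n}.  An element of A is a finitely supported
  coefficient function on monomials.\<close>

definition mons :: "nat \<Rightarrow> (nat \<Rightarrow> nat) set" where
  "mons n = {a. \<forall>i. i \<notin> {1..n} \<longrightarrow> a i = 0}"

definition mdeg :: "nat \<Rightarrow> (nat \<Rightarrow> nat) \<Rightarrow> nat" where
  "mdeg n a = (\<Sum>i\<in>{1..n}. a i)"

definition skew_carrier :: "nat \<Rightarrow> ((nat \<Rightarrow> nat) \<Rightarrow> 'k::field) set" where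
  "skew_carrier n = {f. finite {a. f a \<noteq> 0} \<and> (\<forall>a. f a \<noteq> 0 \<longrightarrow> a \<in> mons n)}"

text \<open>x^a x^b = (prod_{j<i} p_{ji}^{a_i b_j}) x^{a+b}, using x_i x_j = p_{ji} x_j x_i.\<close>
definition twist :: "(nat \<Rightarrow> nat \<Rightarrow> 'k::field) \<Rightarrow> nat \<Rightarrow> (nat \<Rightarrow> nat) \<Rightarrow> (nat \<Rightarrow> nat) \<Rightarrow> 'k" where
  "twist p n a b = (\<Prod>(j,i)\<in>{(j,i). j \<in> {1..n} \<and> i \<in> {1..n} \<and> j < i}. p j i ^ (a i * b j))"

definition skew_mult :: "(nat \<Rightarrow> nat \<Rightarrow> 'k::field) \<Rightarrow> nat \<Rightarrow>
    ((nat \<Rightarrow> nat) \<Rightarrow> 'k) \<Rightarrow> ((nat \<Rightarrow> nat) \<Rightarrow> 'k) \<Rightarrow> ((nat \<Rightarrow> nat) \<Rightarrow> 'k)" where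
  "skew_mult p n f g = (\<lambda>c. \<Sum>(a,b)\<in>{(a,b). a \<in> mons n \<and> b \<in> mons n \<and> (\<forall>i. a i + b i = c i)}.
       f a * g b * twist p n a b)"

definition mono :: "(nat \<Rightarrow> nat) \<Rightarrow> ((nat \<Rightarrow> nat) \<Rightarrow> 'k::field)" where
  "mono a = (\<lambda>b. if b = a then 1 else 0)"

definition skew_one :: "(nat \<Rightarrow> nat) \<Rightarrow> 'k::field" where
  "skew_one = mono (\<lambda>_. 0)"

definition var :: "nat \<Rightarrow> ((nat \<Rightarrow> nat) \<Rightarrow> 'k::field)" where
  "var i = mono (\<lambda>j. if j = i then 1 else 0)"

definition smult_el :: "'k::field \<Rightarrow> ((nat \<Rightarrow> nat) \<Rightarrow> 'k) \<Rightarrow> ((nat \<Rightarrow> nat) \<Rightarrow> 'k)" where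
  "smult_el c f = (\<lambda>a. c * f a)"

definition homog :: "nat \<Rightarrow> nat \<Rightarrow> ((nat \<Rightarrow> nat) \<Rightarrow> 'k::field) \<Rightarrow> bool" where
  "homog n d f \<longleftrightarrow> (\<forall>a. f a \<noteq> 0 \<longrightarrow> mdeg n a = d)"

text \<open>Graded k-algebra automorphisms of A (extended by the identity outside the carrier,
  so that Aut(A) is an honest group of functions under composition).\<close>
definition graded_aut :: "(nat \<Rightarrow> nat \<Rightarrow> 'k::field) \<Rightarrow> nat \<Rightarrow>
    (((nat \<Rightarrow> nat) \<Rightarrow> 'k) \<Rightarrow> ((nat \<Rightarrow> nat) \<Rightarrow> 'k)) \<Rightarrow> bool" where
  "graded_aut p n g \<longleftrightarrow>
     bij_betw g (skew_carrier n) (skew_carrier n) \<and>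
     (\<forall>f. f \<notin> skew_carrier n \<longrightarrow> g f = f) \<and>
     (\<forall>f\<in>skew_carrier n. \<forall>h\<in>skew_carrier n. g (\<lambda>a. f a + h a) = (\<lambda>a. g f a + g h a)) \<and>
     (\<forall>c. \<forall>f\<in>skew_carrier n. g (smult_el c f) = smult_el c (g f)) \<and>
     (\<forall>f\<in>skew_carrier n. \<forall>h\<in>skew_carrier n. g (skew_mult p n f h) = skew_mult p n (g f) (g h)) \<and>
     g skew_one = skew_one \<and>
     (\<forall>d. \<forall>f\<in>skew_carrier n. homog n d f \<longrightarrow> homog n d (g f))"

text \<open>Trace of g on A_d (monomial basis) and the trace series.\<close>
definition trace_deg :: "nat \<Rightarrow> (((nat \<Rightarrow> nat) \<Rightarrow> 'k) \<Rightarrow> ((nat \<Rightarrow> nat) \<Rightarrow> 'k::field)) \<Rightarrow> nat \<Rightarrow> 'k" where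
  "trace_deg n g d = (\<Sum>a\<in>{a\<in>mons n. mdeg n a = d}. g (mono a) a)"

definition trace_series :: "nat \<Rightarrow> (((nat \<Rightarrow> nat) \<Rightarrow> 'k) \<Rightarrow> ((nat \<Rightarrow> nat) \<Rightarrow> 'k::field)) \<Rightarrow> 'k fps" where
  "trace_series n g = Abs_fps (trace_deg n g)"

definition quasi_reflection :: "nat \<Rightarrow> (((nat \<Rightarrow> nat) \<Rightarrow> 'k) \<Rightarrow> ((nat \<Rightarrow> nat) \<Rightarrow> 'k::field)) \<Rightarrow> bool" where
  "quasi_reflection n g \<longleftrightarrow> (\<exists>lam. lam \<noteq> 1 \<and>
     trace_series n g = inverse ((1 - fps_X) ^ (n - 1) * (1 - fps_const lam * fps_X)))"

definition aut_subgroup :: "(nat \<Rightarrow> nat \<Rightarrow> 'k::field) \<Rightarrow> nat \<Rightarrow>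
    ((((nat \<Rightarrow> nat) \<Rightarrow> 'k) \<Rightarrow> ((nat \<Rightarrow> nat) \<Rightarrow> 'k)) set) \<Rightarrow> bool" where
  "aut_subgroup p n H \<longleftrightarrow>
     (\<forall>g\<in>H. graded_aut p n g) \<and> id \<in> H \<and> (\<forall>g\<in>H. \<forall>h\<in>H. g \<circ> h \<in> H) \<and>
     (\<forall>g\<in>H. \<exists>h\<in>H. h \<circ> g = id \<and> g \<circ> h = id)"

definition generated_by_qr :: "(nat \<Rightarrow> nat \<Rightarrow> 'k::field) \<Rightarrow> nat \<Rightarrow>
    ((((nat \<Rightarrow> nat) \<Rightarrow> 'k) \<Rightarrow> ((nat \<Rightarrow> nat) \<Rightarrow> 'k)) set) \<Rightarrow> bool" where
  "generated_by_qr p n G \<longleftrightarrow>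
     (\<forall>H. aut_subgroup p n H \<and> {g\<in>G. quasi_reflection n g} \<subseteq> H \<longrightarrow> G \<subseteq> H)"

text \<open>tau_{s,t,lambda} is defined (p_st = -1, p_sj = p_tj for j <> s,t, lambda <> 0)
  and belongs to G.\<close>
definition tau_in :: "(nat \<Rightarrow> nat \<Rightarrow> 'k::field) \<Rightarrow> nat \<Rightarrow>
    ((((nat \<Rightarrow> nat) \<Rightarrow> 'k) \<Rightarrow> ((nat \<Rightarrow> nat) \<Rightarrow> 'k)) set) \<Rightarrow> nat \<Rightarrow> nat \<Rightarrow> 'k \<Rightarrow> bool" where
  "tau_in p n G s t lam \<longleftrightarrow>
     s \<in> {1..n} \<and> t \<in> {1..n} \<and> s \<noteq> t \<and> lam \<noteq> 0 \<and> p s t = -1 \<and>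
     (\<forall>j\<in>{1..n}. j \<noteq> s \<and> j \<noteq> t \<longrightarrow> p s j = p t j) \<and>
     (\<exists>g\<in>G. g (var s) = smult_el lam (var t) \<and> g (var t) = smult_el (- inverse lam) (var s) \<and>
        (\<forall>i\<in>{1..n}. i \<noteq> s \<and> i \<noteq> t \<longrightarrow> g (var i) = var i))"

definition is_circle :: "(nat \<Rightarrow> nat \<Rightarrow> 'k::field) \<Rightarrow> nat \<Rightarrow>
    ((((nat \<Rightarrow> nat) \<Rightarrow> 'k) \<Rightarrow> ((nat \<Rightarrow> nat) \<Rightarrow> 'k)) set) \<Rightarrow> bool" where
  "is_circle p n G \<longleftrightarrow>
     (\<forall>i\<in>{1..n}. \<forall>j\<in>{1..n}. i \<noteq> j \<longrightarrow>
        (i, j) \<in> {(s, t). \<exists>lam. tau_in p n G s t lam}\<^sup>+)"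

end

theory Submission
  imports Defs
begin

(*
  Write  g : s \<rightharpoonup>\<^sub>\<lambda> t  when the automorphism g acts on the generators as
  tau_{s,t,\<lambda>}:  x_s \<mapsto> \<lambda> x_t,  x_t \<mapsto> -\<lambda>\<^sup>-\<^sup>1 x_s,  x_i \<mapsto> x_i otherwise.
  Together with the symmetry of the condition p_st = -1, p_sj = p_tj, this shows that
  the relation "tau_{s,t,\<lambda>} \<in> G for some \<lambda>" is symmetric and transitive (with
  multiplicative scalars), so the circle hypothesis makes it hold for all s \<noteq> t.
  Fixing scalars c_j with tau_{1,j,c_j} \<in> G (c_1 = 1) and composing
  tau_{i,1,c_i\<^sup>-\<^sup>1} with tau_{1,j,c_j} gives tau_{i,j,c_j/c_i} \<in> G, i.e. tau_{i,j,1}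
  after rescaling x_i to c_i x_i; and p_ij = -1 is part of tau_{i,j,_} being defined.
*)

lemma smult_el_smult_el [simp]: "smult_el a (smult_el b f) = smult_el (a * b) f"
  by (simp add: smult_el_def mult.assoc)

lemma smult_el_one [simp]: "smult_el 1 f = f"
  by (simp add: smult_el_def)

lemma var_in_carrier:
  assumes "i \<in> {1..n}"
  shows "(var i :: (nat \<Rightarrow> nat) \<Rightarrow> 'k::field) \<in> skew_carrier n"
proof -
  have support: "{a. (var i :: (nat \<Rightarrow> nat) \<Rightarrow> 'k) a \<noteq> 0} = {\<lambda>j. if j = i then 1 else 0}"
    by (auto simp: var_def mono_def)
  have "(\<lambda>j. if j = i then 1 else 0) \<in> mons n"
    using assms by (auto simp: mons_def)
  then show ?thesis
    unfolding skew_carrier_def using support by (simp add: set_eq_iff)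
qed

lemma graded_aut_smult_var:
  assumes "graded_aut p n g" and "i \<in> {1..n}"
  shows "g (smult_el c (var i)) = smult_el c (g (var i))"
  using assms var_in_carrier[OF assms(2)] unfolding graded_aut_def by blast

definition swaps_vars :: "nat \<Rightarrow> (((nat \<Rightarrow> nat) \<Rightarrow> 'k) \<Rightarrow> ((nat \<Rightarrow> nat) \<Rightarrow> 'k::field))
    \<Rightarrow> nat \<Rightarrow> nat \<Rightarrow> 'k \<Rightarrow> bool" where
  "swaps_vars n g s t lam \<longleftrightarrow>
     g (var s) = smult_el lam (var t) \<and> g (var t) = smult_el (- inverse lam) (var s) \<and>
     (\<forall>i\<in>{1..n}. i \<noteq> s \<and> i \<noteq> t \<longrightarrow> g (var i) = var i)"

lemma tau_in_iff:
  "tau_in p n G s t lam \<longleftrightarrow>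
     s \<in> {1..n} \<and> t \<in> {1..n} \<and> s \<noteq> t \<and> lam \<noteq> 0 \<and> p s t = -1 \<and>
     (\<forall>j\<in>{1..n}. j \<noteq> s \<and> j \<noteq> t \<longrightarrow> p s j = p t j) \<and> (\<exists>g\<in>G. swaps_vars n g s t lam)"
  by (simp add: tau_in_def swaps_vars_def)

lemma swaps_vars_inverse:
  assumes h: "graded_aut p n h" and hg: "h \<circ> g = id"
    and g: "swaps_vars n g s t lam"
    and s: "s \<in> {1..n}" and t: "t \<in> {1..n}" and lam: "lam \<noteq> 0"
  shows "swaps_vars n h t s (inverse lam)"
proof -
  have hg_eq: "h (g x) = x" for x
    using hg by (metis comp_apply id_apply)
  have "smult_el (- inverse lam) (h (var s)) = var t"
    using g hg_eq graded_aut_smult_var[OF h s] by (metis swaps_vars_def)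
  then have "smult_el (- lam) (smult_el (- inverse lam) (h (var s))) = smult_el (- lam) (var t)"
    by simp
  then have hs: "h (var s) = smult_el (- lam) (var t)"
    using lam by simp
  have "smult_el lam (h (var t)) = var s"
    using g hg_eq graded_aut_smult_var[OF h t] by (metis swaps_vars_def)
  then have "smult_el (inverse lam) (smult_el lam (h (var t))) = smult_el (inverse lam) (var s)"
    by simp
  then have ht: "h (var t) = smult_el (inverse lam) (var s)"
    using lam by simp
  have "\<forall>i\<in>{1..n}. i \<noteq> t \<and> i \<noteq> s \<longrightarrow> h (var i) = var i"
    using g hg_eq by (metis swaps_vars_def)
  with hs ht lam show ?thesis
    by (simp add: swaps_vars_def)
qed

lemma swaps_vars_conjugate:
  assumes h: "graded_aut p n h" and f: "graded_aut p n f" and hg: "h \<circ> g = id"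
    and g_ab: "swaps_vars n g a b lam" and f_bc: "swaps_vars n f b c mu"
    and a: "a \<in> {1..n}" and b: "b \<in> {1..n}" and c: "c \<in> {1..n}"
    and lam: "lam \<noteq> 0" and mu: "mu \<noteq> 0"
    and ab: "a \<noteq> b" and bc: "b \<noteq> c" and ac: "a \<noteq> c"
  shows "swaps_vars n (h \<circ> f \<circ> g) a c (lam * mu)"
proof -
  have h_ba: "swaps_vars n h b a (inverse lam)"
    using swaps_vars_inverse[OF h hg g_ab a b lam] .
  have ga: "g (var a) = smult_el lam (var b)" and gb: "g (var b) = smult_el (- inverse lam) (var a)"
    and gi: "\<forall>i\<in>{1..n}. i \<noteq> a \<and> i \<noteq> b \<longrightarrow> g (var i) = var i"
    using g_ab by (auto simp: swaps_vars_def)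
  have fb: "f (var b) = smult_el mu (var c)" and fc: "f (var c) = smult_el (- inverse mu) (var b)"
    and fi: "\<forall>i\<in>{1..n}. i \<noteq> b \<and> i \<noteq> c \<longrightarrow> f (var i) = var i"
    using f_bc by (auto simp: swaps_vars_def)
  have ha: "h (var a) = smult_el (- lam) (var b)" and hb: "h (var b) = smult_el (inverse lam) (var a)"
    and hi: "\<forall>i\<in>{1..n}. i \<noteq> b \<and> i \<noteq> a \<longrightarrow> h (var i) = var i"
    using h_ba lam by (auto simp: swaps_vars_def)
  have gc: "g (var c) = var c" and hc: "h (var c) = var c" and fa: "f (var a) = var a"
    using gi hi fi a c ab ac bc by auto
  note sh = graded_aut_smult_var[OF h] and sf = graded_aut_smult_var[OF f]
  have "(h \<circ> f \<circ> g) (var a) = smult_el (lam * mu) (var c)"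
    by (simp add: ga sf[OF b] fb sh[OF c] hc)
  moreover have "(h \<circ> f \<circ> g) (var c) = smult_el (- inverse (lam * mu)) (var a)"
    by (simp add: gc fc sh[OF b] hb field_simps)
  moreover have "(h \<circ> f \<circ> g) (var b) = var b"
    using lam by (simp add: gb sf[OF a] fa sh[OF a] ha)
  moreover have "\<forall>i\<in>{1..n}. i \<noteq> a \<and> i \<noteq> c \<and> i \<noteq> b \<longrightarrow> (h \<circ> f \<circ> g) (var i) = var i"
    using gi fi hi by simp
  ultimately show ?thesis
    unfolding swaps_vars_def by metis
qed

lemma p_minus_one_sym:
  fixes a b n :: nat and p :: "nat \<Rightarrow> nat \<Rightarrow> 'k::field"
  assumes p_inv: "\<forall>i\<in>{1..n}. \<forall>j\<in>{1..n}. i > j \<longrightarrow> p i j = inverse (p j i)"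
    and a: "a \<in> {1..n}" and b: "b \<in> {1..n}" and ab: "a \<noteq> b" and pab: "p a b = -1"
  shows "p b a = -1"
proof (cases "a < b")
  case True
  then show ?thesis using p_inv a b pab by auto
next
  case False
  then have "b < a"
    using ab by linarith
  then have "p a b = inverse (p b a)"
    using p_inv a b by blast
  then have "inverse (p b a) = -1"
    using pab by simp
  then show ?thesis
    by (metis inverse_inverse_eq inverse_minus_eq inverse_1)
qed

lemma aut_subgroup_inverse:
  assumes "aut_subgroup p n G" and "g \<in> G"
  obtains h where "h \<in> G" and "h \<circ> g = id" and "graded_aut p n h"
  using assms unfolding aut_subgroup_def by metis

lemma tau_in_reverse:
  assumes G: "aut_subgroup p n G"
    and p_inv: "\<forall>i\<in>{1..n}. \<forall>j\<in>{1..n}. i > j \<longrightarrow> p i j = inverse (p j i)"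
    and tau: "tau_in p n G a b lam"
  shows "tau_in p n G b a (inverse lam)"
proof -
  from tau obtain g where "g \<in> G" and g_ab: "swaps_vars n g a b lam"
    and a: "a \<in> {1..n}" and b: "b \<in> {1..n}" and ab: "a \<noteq> b" and lam: "lam \<noteq> 0"
    and pab: "p a b = -1" and p_eq: "\<forall>j\<in>{1..n}. j \<noteq> a \<and> j \<noteq> b \<longrightarrow> p a j = p b j"
    unfolding tau_in_iff by blast
  then obtain h where "h \<in> G" and "h \<circ> g = id" and "graded_aut p n h"
    using aut_subgroup_inverse[OF G] by metis
  then have "swaps_vars n h b a (inverse lam)"
    using swaps_vars_inverse g_ab a b lam by blast
  moreover have "p b a = -1"
    using p_minus_one_sym[OF p_inv a b ab pab] .
  ultimately show ?thesis
    unfolding tau_in_iff using \<open>h \<in> G\<close> a b ab lam p_eq by auto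
qed

lemma tau_in_trans:
  assumes G: "aut_subgroup p n G"
    and p_inv: "\<forall>i\<in>{1..n}. \<forall>j\<in>{1..n}. i > j \<longrightarrow> p i j = inverse (p j i)"
    and tau_ab: "tau_in p n G a b lam" and tau_bc: "tau_in p n G b c mu" and ac: "a \<noteq> c"
  shows "tau_in p n G a c (lam * mu)"
proof -
  from tau_ab obtain g where "g \<in> G" and g_ab: "swaps_vars n g a b lam"
    and a: "a \<in> {1..n}" and b: "b \<in> {1..n}" and ab: "a \<noteq> b" and lam: "lam \<noteq> 0"
    and pab: "p a b = -1" and p_ab: "\<forall>j\<in>{1..n}. j \<noteq> a \<and> j \<noteq> b \<longrightarrow> p a j = p b j"
    unfolding tau_in_iff by blast
  from tau_bc obtain f where "f \<in> G" and f_bc: "swaps_vars n f b c mu"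
    and c: "c \<in> {1..n}" and bc: "b \<noteq> c" and mu: "mu \<noteq> 0"
    and pbc: "p b c = -1" and p_bc: "\<forall>j\<in>{1..n}. j \<noteq> b \<and> j \<noteq> c \<longrightarrow> p b j = p c j"
    unfolding tau_in_iff by blast
  obtain h where "h \<in> G" and hg: "h \<circ> g = id" and h: "graded_aut p n h"
    using aut_subgroup_inverse[OF G \<open>g \<in> G\<close>] by metis
  have f: "graded_aut p n f"
    using G \<open>f \<in> G\<close> unfolding aut_subgroup_def by blast
  have "h \<circ> f \<circ> g \<in> G"
    using G \<open>g \<in> G\<close> \<open>f \<in> G\<close> \<open>h \<in> G\<close> unfolding aut_subgroup_def by blast
  moreover have "swaps_vars n (h \<circ> f \<circ> g) a c (lam * mu)"
    using swaps_vars_conjugate[OF h f hg g_ab f_bc a b c lam mu ab bc ac] .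
  moreover have "p a c = -1"
    using p_ab c ac bc pbc by auto
  moreover have "p a j = p c j" if "j \<in> {1..n}" "j \<noteq> a" "j \<noteq> c" for j
  proof (cases "j = b")
    case True
    then show ?thesis using pab p_minus_one_sym[OF p_inv b c bc pbc] by simp
  next
    case False
    then show ?thesis using p_ab p_bc that by auto
  qed
  ultimately show ?thesis
    unfolding tau_in_iff using a c ac lam mu by auto
qed

lemma tau_in_of_chain:
  assumes G: "aut_subgroup p n G"
    and p_inv: "\<forall>i\<in>{1..n}. \<forall>j\<in>{1..n}. i > j \<longrightarrow> p i j = inverse (p j i)"
    and chain: "(i, j) \<in> {(s, t). \<exists>lam. tau_in p n G s t lam}\<^sup>+"
  shows "i \<noteq> j \<Longrightarrow> \<exists>lam. tau_in p n G i j lam"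
  using chain
proof (induction rule: trancl_induct)
  case (base y)
  then show ?case by auto
next
  case (step y z)
  from step.hyps(2) obtain mu where tau_yz: "tau_in p n G y z mu"
    by auto
  show ?case
  proof (cases "i = y")
    case True
    then show ?thesis using tau_yz by auto
  next
    case False
    then obtain lam where "tau_in p n G i y lam"
      using step.IH by auto
    then show ?thesis
      using tau_in_trans[OF G p_inv _ tau_yz \<open>i \<noteq> z\<close>] by blast
  qed
qed

lemma circle_tau_in:
  assumes G: "aut_subgroup p n G"
    and p_inv: "\<forall>i\<in>{1..n}. \<forall>j\<in>{1..n}. i > j \<longrightarrow> p i j = inverse (p j i)"
    and circle: "is_circle p n G"
    and "i \<in> {1..n}" "j \<in> {1..n}" "i \<noteq> j"
  shows "\<exists>lam. tau_in p n G i j lam"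
  using tau_in_of_chain[OF G p_inv] circle assms(4-6) unfolding is_circle_def by blast

theorem lemma4p1:
  fixes p :: "nat \<Rightarrow> nat \<Rightarrow> 'k::field_char_0"
    and n :: nat
    and G :: "(((nat \<Rightarrow> nat) \<Rightarrow> 'k) \<Rightarrow> ((nat \<Rightarrow> nat) \<Rightarrow> 'k)) set"
  assumes alg_closed: "\<forall>q :: 'k poly. degree q \<noteq> 0 \<longrightarrow> (\<exists>x. poly q x = 0)"
    and n2: "n \<ge> 2"
    and p_nz: "\<forall>i\<in>{1..n}. \<forall>j\<in>{1..n}. p i j \<noteq> 0"
    and p_diag: "\<forall>i\<in>{1..n}. p i i = 1"
    and p_inv: "\<forall>i\<in>{1..n}. \<forall>j\<in>{1..n}. i > j \<longrightarrow> p i j = inverse (p j i)"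
    and G_sub: "aut_subgroup p n G"
    and G_fin: "finite G"
    and G_gen: "generated_by_qr p n G"
    and circle: "is_circle p n G"
  shows "(\<exists>c :: nat \<Rightarrow> 'k. (\<forall>i\<in>{1..n}. c i \<noteq> 0) \<and>
            (\<forall>i\<in>{1..n}. \<forall>j\<in>{1..n}. i \<noteq> j \<longrightarrow> tau_in p n G i j (c j / c i)))
         \<and> (\<forall>i\<in>{1..n}. \<forall>j\<in>{1..n}. i < j \<longrightarrow> p i j = -1)"
proof -
  note tau_ex = circle_tau_in[OF G_sub p_inv circle]
  have one: "1 \<in> {1..n}" using n2 by auto
  define c :: "nat \<Rightarrow> 'k" where "c j = (if j = 1 then 1 else SOME lam. tau_in p n G 1 j lam)" for j
  have tau_1j: "tau_in p n G 1 j (c j)" if "j \<in> {1..n}" "j \<noteq> 1" for j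
    using someI_ex[OF tau_ex[OF one that(1) that(2)[symmetric]]] that by (simp add: c_def)
  have c_nz: "c j \<noteq> 0" if "j \<in> {1..n}" for j
    using tau_1j[OF that] by (cases "j = 1") (auto simp: c_def tau_in_def)
  have tau_ij: "tau_in p n G i j (c j / c i)" if ij: "i \<in> {1..n}" "j \<in> {1..n}" "i \<noteq> j" for i j
  proof (cases "i = 1")
    case True
    then show ?thesis using tau_1j[OF ij(2)] ij by (simp add: c_def)
  next
    case False
    then have tau_i1: "tau_in p n G i 1 (inverse (c i))"
      using tau_in_reverse[OF G_sub p_inv tau_1j[OF ij(1)]] by simp
    show ?thesis
    proof (cases "j = 1")
      case True
      then show ?thesis using tau_i1 by (simp add: c_def divide_inverse)
    next
      case False
      then show ?thesis
        using tau_in_trans[OF G_sub p_inv tau_i1 tau_1j[OF ij(2)] ij(3)]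
        by (simp add: divide_inverse mult.commute)
    qed
  qed
  have "p i j = -1" if "i \<in> {1..n}" "j \<in> {1..n}" "i < j" for i j
    using tau_ex[OF that(1,2)] that(3) unfolding tau_in_def by fastforce
  then show ?thesis
    using tau_ij c_nz by blast
qed

end
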